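(* Let $R$ be a commutative ring. Then $R$ is locally stable if and only if for every $c\in R$ and every $u\in R$ whose image $\overline{u}$ is a unit of $R/cR$, there exists a stable element $a\in R$ with $u-a\in cR$.
   Context: All rings are commutative with identity. A ring $S$ has stable range 1 if whenever $a,b\in S$ with $aS+bS=S$ there is $y\in S$ with $a+by$ a unit. An element $a\in R$ is stable if $R/aR$ has stable range 1. $R$ is locally stable if whenever $a,b\in R$ with $aR+bR=R$ there is $y\in R$ such that $R/(a+by)R$ has stable range 1. *)

theory Defs
  imports "HOL-Algebra.Algebra"
begin

definition stable_range_one :: "('a, 'b) ring_scheme \<Rightarrow> bool" where
  "stable_range_one S \<longleftrightarrow>
     (\<forall>a \<in> carrier S. \<forall>b \<in> carrier S.
        (PIdl\<^bsub>S\<^esub> a) <+>\<^bsub>S\<^esub> (PIdl\<^bsub>S\<^esub> b) = carrier S \<longrightarrow>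
        (\<exists>y \<in> carrier S. a \<oplus>\<^bsub>S\<^esub> (b \<otimes>\<^bsub>S\<^esub> y) \<in> Units S))"

definition stable_elem :: "('a, 'b) ring_scheme \<Rightarrow> 'a \<Rightarrow> bool" where
  "stable_elem R a \<longleftrightarrow> stable_range_one (R Quot (PIdl\<^bsub>R\<^esub> a))"

definition locally_stable :: "('a, 'b) ring_scheme \<Rightarrow> bool" where
  "locally_stable R \<longleftrightarrow>
     (\<forall>a \<in> carrier R. \<forall>b \<in> carrier R.
        (PIdl\<^bsub>R\<^esub> a) <+>\<^bsub>R\<^esub> (PIdl\<^bsub>R\<^esub> b) = carrier R \<longrightarrow>
        (\<exists>y \<in> carrier R. stable_elem R (a \<oplus>\<^bsub>R\<^esub> (b \<otimes>\<^bsub>R\<^esub> y))))"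

end

theory Submission
  imports Defs
begin

text \<open>Both sides say the same thing about a pair (a, b) = (u, c): aR + bR = R holds exactly when
  a is a unit modulo b, and the elements a + b y are exactly the elements congruent to a modulo b.\<close>

context cring
begin

lemma diff_mem_cgenideal_iff:
  assumes "a \<in> carrier R" "a' \<in> carrier R" "b \<in> carrier R"
  shows "a \<ominus> a' \<in> PIdl b \<longleftrightarrow> (\<exists>y\<in>carrier R. a \<oplus> b \<otimes> y = a')"
proof
  assume "a \<ominus> a' \<in> PIdl b"
  then obtain z where z: "z \<in> carrier R" "a \<ominus> a' = z \<otimes> b"
    unfolding cgenideal_def by auto
  have "a' = a \<ominus> (a \<ominus> a')" using assms by algebra
  also have "\<dots> = a \<oplus> b \<otimes> (\<ominus> z)" using z assms by algebra
  finally show "\<exists>y\<in>carrier R. a \<oplus> b \<otimes> y = a'" using z(1) by (metis add.inv_closed)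
next
  assume "\<exists>y\<in>carrier R. a \<oplus> b \<otimes> y = a'"
  then obtain y where y: "y \<in> carrier R" "a' = a \<oplus> b \<otimes> y" by metis
  then have "a \<ominus> a' = (\<ominus> y) \<otimes> b" using assms by algebra
  then show "a \<ominus> a' \<in> PIdl b" unfolding cgenideal_def using y(1) by blast
qed

lemma rcoset_in_Units_FactRing_iff:
  assumes I: "ideal I R" and u: "u \<in> carrier R"
  shows "I +> u \<in> Units (R Quot I) \<longleftrightarrow> (\<exists>x\<in>carrier R. u \<otimes> x \<ominus> \<one> \<in> I)"
proof -
  interpret I: ideal I R using I .
  have coset_eq_one_iff: "I +> v = I +> \<one> \<longleftrightarrow> v \<ominus> \<one> \<in> I" if "v \<in> carrier R" for v
    using quotient_eq_iff_same_a_r_cos[OF I] that by simp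
  show ?thesis
  proof
    assume "I +> u \<in> Units (R Quot I)"
    then obtain Y where Y: "Y \<in> a_rcosets I" "Y \<otimes>\<^bsub>R Quot I\<^esub> (I +> u) = I +> \<one>"
      unfolding Units_def FactRing_def by auto
    then obtain x where x: "x \<in> carrier R" "Y = I +> x"
      unfolding A_RCOSETS_def' by auto
    with Y(2) u have "I +> (u \<otimes> x) = I +> \<one>"
      by (simp add: FactRing_def I.rcoset_mult_add m_comm)
    then show "\<exists>x\<in>carrier R. u \<otimes> x \<ominus> \<one> \<in> I" using coset_eq_one_iff x(1) u by auto
  next
    assume "\<exists>x\<in>carrier R. u \<otimes> x \<ominus> \<one> \<in> I"
    then obtain x where x: "x \<in> carrier R" "u \<otimes> x \<ominus> \<one> \<in> I" by blast
    then have "I +> (u \<otimes> x) = I +> \<one>" "I +> (x \<otimes> u) = I +> \<one>"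
      using coset_eq_one_iff u m_comm by auto
    moreover have "I +> x \<in> a_rcosets I" "I +> u \<in> a_rcosets I"
      using x(1) u unfolding A_RCOSETS_def' by auto
    ultimately show "I +> u \<in> Units (R Quot I)"
      unfolding Units_def FactRing_def using I.rcoset_mult_add x(1) u
      by (auto intro!: bexI[of _ "I +> x"])
  qed
qed

lemma cgenideal_add_eq_carrier_iff:
  assumes a: "a \<in> carrier R" and b: "b \<in> carrier R"
  shows "PIdl a <+> PIdl b = carrier R \<longleftrightarrow> (\<exists>x\<in>carrier R. \<exists>y\<in>carrier R. x \<otimes> a \<oplus> y \<otimes> b = \<one>)"
proof
  assume "PIdl a <+> PIdl b = carrier R"
  then have "\<one> \<in> PIdl a <+> PIdl b" by simp
  then show "\<exists>x\<in>carrier R. \<exists>y\<in>carrier R. x \<otimes> a \<oplus> y \<otimes> b = \<one>"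
    unfolding set_add_def' cgenideal_def by fastforce
next
  assume "\<exists>x\<in>carrier R. \<exists>y\<in>carrier R. x \<otimes> a \<oplus> y \<otimes> b = \<one>"
  then have "\<one> \<in> PIdl a <+> PIdl b"
    unfolding set_add_def' cgenideal_def by force
  moreover have "ideal (PIdl a <+> PIdl b) R"
    using add_ideals cgenideal_ideal a b by blast
  ultimately show "PIdl a <+> PIdl b = carrier R" using ideal.one_imp_carrier by blast
qed

lemma cgenideal_add_eq_carrier_iff_unit_mod:
  assumes a: "a \<in> carrier R" and b: "b \<in> carrier R"
  shows "PIdl a <+> PIdl b = carrier R \<longleftrightarrow> PIdl b +> a \<in> Units (R Quot PIdl b)"
proof -
  have "PIdl a <+> PIdl b = carrier R \<longleftrightarrow> (\<exists>x\<in>carrier R. \<exists>y\<in>carrier R. a \<otimes> x \<oplus> b \<otimes> y = \<one>)"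
    using a b by (auto simp: cgenideal_add_eq_carrier_iff m_comm)
  also have "\<dots> \<longleftrightarrow> (\<exists>x\<in>carrier R. a \<otimes> x \<ominus> \<one> \<in> PIdl b)"
    using a b by (simp add: diff_mem_cgenideal_iff)
  also have "\<dots> \<longleftrightarrow> PIdl b +> a \<in> Units (R Quot PIdl b)"
    using a b by (simp add: rcoset_in_Units_FactRing_iff cgenideal_ideal)
  finally show ?thesis .
qed

end

theorem proposition2p1:
  fixes R :: "('a, 'b) ring_scheme"
  assumes "cring R"
  shows "locally_stable R \<longleftrightarrow>
    (\<forall>c \<in> carrier R. \<forall>u \<in> carrier R.
       (PIdl\<^bsub>R\<^esub> c) +>\<^bsub>R\<^esub> u \<in> Units (R Quot (PIdl\<^bsub>R\<^esub> c)) \<longrightarrow>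
       (\<exists>a \<in> carrier R. stable_elem R a \<and> u \<ominus>\<^bsub>R\<^esub> a \<in> PIdl\<^bsub>R\<^esub> c))"
proof -
  interpret cring R using assms .
  have congruent_iff: "(\<exists>y\<in>carrier R. stable_elem R (u \<oplus>\<^bsub>R\<^esub> c \<otimes>\<^bsub>R\<^esub> y))
      \<longleftrightarrow> (\<exists>a\<in>carrier R. stable_elem R a \<and> u \<ominus>\<^bsub>R\<^esub> a \<in> PIdl\<^bsub>R\<^esub> c)"
    if "c \<in> carrier R" "u \<in> carrier R" for c u
    using that diff_mem_cgenideal_iff by auto
  show ?thesis
    unfolding locally_stable_def
    by (auto simp: cgenideal_add_eq_carrier_iff_unit_mod congruent_iff)
qed

end
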